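(* Assume $abcd\neq0$ and fix $\omega\in B_{out}$. Let $\theta>0$ be defined by $\cosh\theta=|x(\omega)|$. Then \[\lim_{M\to\infty}\mathcal{E}_M(\omega)=\frac{\cosh\theta}{\sinh\theta}=\frac{|x(\omega)|}{\sqrt{x(\omega)^2-1}}.\]
   Context: Setting: $C=\begin{bmatrix} a&b\\ c&d\end{bmatrix}$ a fixed $2\times2$ unitary matrix, $\Delta=\det C$, a fixed square root $\Delta^{1/2}$; for each $M\ge1$, $\Gamma_M=\{0,\dots,M-1\}$ and $E_M$ is the linear map on $\ell^2(\Gamma_M;\mathbb{C}^2)$ with $(E_M\varphi)(x)=P\varphi(x+1)+Q\varphi(x-1)$, $\varphi(-1)=\varphi(M)=0$, $P=\begin{bmatrix} a&b\\0&0\end{bmatrix}$, $Q=\begin{bmatrix}0&0\\c&d\end{bmatrix}$. For $\omega$ on the unit circle let $z=\Delta^{1/2}\omega$ and let $\varphi$ be the unique solution of $(z-E_M)\varphi=\delta_0|R\rangle$, $|R\rangle=(0,1)^\top$; the energy is $\mathcal{E}_M(\omega)=\sum_{n=0}^{M-1}\|\varphi(n)\|^2_{\mathbb{C}^2}$. Let $x(\omega)=\frac{\omega+\omega^{-1}}{2|a|}$ and $B_{out}=\{\omega:|\omega|=1,\ |x(\omega)|>1\}$. *)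

theory Defs
  imports "HOL-Analysis.Analysis"
begin

text \<open>The 2x2 matrix C = [[a,b],[c,d]] is unitary: C* C = I (equivalently C C* = I).\<close>
definition unitary2 :: "complex \<Rightarrow> complex \<Rightarrow> complex \<Rightarrow> complex \<Rightarrow> bool" where
  "unitary2 a b c d \<longleftrightarrow>
     cnj a * a + cnj c * c = 1 \<and> cnj b * b + cnj d * d = 1 \<and> cnj a * b + cnj c * d = 0"

text \<open>A vector phi in l2(Gamma_M; C^2), written as a function on the integers
  (pairs = the two components in C^2), extended by zero outside Gamma_M = {0..M-1};
  this encodes the boundary conditions phi(-1) = phi(M) = 0.
  (E_M phi)(x) = P phi(x+1) + Q phi(x-1), with P phi = (a phi_1 + b phi_2, 0)
  and Q phi = (0, c phi_1 + d phi_2).\<close>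
definition E_op :: "complex \<Rightarrow> complex \<Rightarrow> complex \<Rightarrow> complex \<Rightarrow> nat
                    \<Rightarrow> (int \<Rightarrow> complex \<times> complex) \<Rightarrow> int \<Rightarrow> complex \<times> complex" where
  "E_op a b c d M \<phi> x =
     (if 0 \<le> x \<and> x < int M then
        (a * fst (\<phi> (x+1)) + b * snd (\<phi> (x+1)), c * fst (\<phi> (x-1)) + d * snd (\<phi> (x-1)))
      else (0, 0))"

definition in_l2_Gamma :: "nat \<Rightarrow> (int \<Rightarrow> complex \<times> complex) \<Rightarrow> bool" where
  "in_l2_Gamma M \<phi> \<longleftrightarrow> (\<forall>x. \<not> (0 \<le> x \<and> x < int M) \<longrightarrow> \<phi> x = (0, 0))"

text \<open>phi solves (z - E_M) phi = delta_0 |R>, |R> = (0,1).\<close>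
definition is_resolvent_sol :: "complex \<Rightarrow> complex \<Rightarrow> complex \<Rightarrow> complex \<Rightarrow> nat \<Rightarrow> complex
                               \<Rightarrow> (int \<Rightarrow> complex \<times> complex) \<Rightarrow> bool" where
  "is_resolvent_sol a b c d M z \<phi> \<longleftrightarrow>
     in_l2_Gamma M \<phi> \<and>
     (\<forall>x. 0 \<le> x \<and> x < int M \<longrightarrow>
        z * fst (\<phi> x) - fst (E_op a b c d M \<phi> x) = 0 \<and>
        z * snd (\<phi> x) - snd (E_op a b c d M \<phi> x) = (if x = 0 then 1 else 0))"

text \<open>Energy E_M(omega) with z = Delta^(1/2) * omega, sqD a fixed square root of Delta.\<close>
definition energy :: "complex \<Rightarrow> complex \<Rightarrow> complex \<Rightarrow> complex \<Rightarrow> complex \<Rightarrow> complex \<Rightarrow> nat \<Rightarrow> real" where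
  "energy a b c d sqD \<omega> M =
     (let \<phi> = (THE \<phi>. is_resolvent_sol a b c d M (sqD * \<omega>) \<phi>)
      in \<Sum>n<M. (cmod (fst (\<phi> (int n))))\<^sup>2 + (cmod (snd (\<phi> (int n))))\<^sup>2)"

definition xfun :: "complex \<Rightarrow> complex \<Rightarrow> complex" where
  "xfun a \<omega> = (\<omega> + inverse \<omega>) / (2 * of_real (cmod a))"

definition B_out :: "complex \<Rightarrow> complex set" where
  "B_out a = {\<omega>. cmod \<omega> = 1 \<and> cmod (xfun a \<omega>) > 1}"

end

theory Submission
  imports Defs
begin

text \<open>For \<open>z = \<Delta>\<^sup>1\<^sup>/\<^sup>2 \<omega>\<close> the bulk equations of \<open>(z - E\<^sub>M) \<phi> = \<delta>\<^sub>0 |R\<rangle>\<close> have geometric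
  solutions \<open>n \<mapsto> r\<^sup>n (r z - d, c)\<close> whose ratios solve \<open>a z r\<^sup>2 - (z\<^sup>2 + \<Delta>) r + d z = 0\<close>.
  For \<open>\<omega> \<in> B\<^sub>o\<^sub>u\<^sub>t\<close> the roots are \<open>\<rho> \<mu>\<^sup>\<plusminus>\<^sup>1\<close> with \<open>|\<rho>| = 1\<close> and \<open>|\<mu>| = e\<^sup>\<theta> > 1\<close>: one mode grows,
  the other decays. The solution is the combination \<open>\<alpha>\<^sub>M\<close> (growing) \<open>+ \<beta>\<^sub>M\<close> (decaying) fixed by
  the boundary conditions at \<open>0\<close> and \<open>M - 1\<close>. Since \<open>\<alpha>\<^sub>M = O(e\<^sup>-\<^sup>2\<^sup>\<theta>\<^sup>M)\<close> and
  \<open>\<beta>\<^sub>M \<rightarrow> 1/(c z)\<close>, the energy tends to the \<open>l\<^sup>2\<close>-norm of the decaying mode alone, which is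
  \<open>(1 + e\<^sup>-\<^sup>2\<^sup>\<theta>)/(1 - e\<^sup>-\<^sup>2\<^sup>\<theta>) = coth \<theta>\<close>.\<close>

lemma unitary2_entries:
  assumes "unitary2 a b c d"
  shows "d = (a * d - b * c) * cnj a" and "b = - (a * d - b * c) * cnj c"
proof -
  have col: "cnj a * a + cnj c * c = 1" and orth: "cnj a * b + cnj c * d = 0"
    using assms unfolding unitary2_def by auto
  have "(a * d - b * c) * cnj a = a * cnj a * d - (cnj a * b) * c" by (simp add: algebra_simps)
  also have "\<dots> = d * (cnj a * a + cnj c * c)"
    using orth by (simp add: eq_neg_iff_add_eq_0[symmetric] algebra_simps)
  finally show "d = (a * d - b * c) * cnj a" using col by simp
  have "(a * d - b * c) * cnj c = a * (cnj c * d) - b * c * cnj c" by (simp add: algebra_simps)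
  also have "\<dots> = - b * (cnj a * a + cnj c * c)"
    using orth by (simp add: eq_neg_iff_add_eq_0[symmetric] add.commute algebra_simps)
  finally have "(a * d - b * c) * cnj c = - b" using col by simp
  then show "b = - (a * d - b * c) * cnj c" by (metis minus_minus mult_minus_left)
qed

lemma unitary2_det_unimodular:
  assumes "unitary2 a b c d"
  shows "(a * d - b * c) * cnj (a * d - b * c) = 1"
proof -
  define D where "D = a * d - b * c"
  have "\<And>D. b = - D * cnj c \<Longrightarrow> d = D * cnj a \<Longrightarrow>
      cnj b * b + cnj d * d = D * cnj D * (cnj a * a + cnj c * c)"
    by (simp add: algebra_simps)
  then have "cnj b * b + cnj d * d = D * cnj D * (cnj a * a + cnj c * c)"
    using unitary2_entries[OF assms] unfolding D_def[symmetric] by blast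
  moreover have "cnj a * a + cnj c * c = 1" and "cnj b * b + cnj d * d = 1"
    using assms unfolding unitary2_def by auto
  ultimately have "D * cnj D = 1" by simp
  then show ?thesis unfolding D_def .
qed

lemma unitary2_column_norm:
  assumes "unitary2 a b c d"
  shows "c * cnj c = 1 - a * cnj a"
  using assms unfolding unitary2_def by (simp add: algebra_simps)

lemma unimodular_iff_norm: "z * cnj z = 1 \<longleftrightarrow> cmod z = 1"
  by (metis complex_norm_square norm_ge_zero of_real_1 of_real_eq_1_iff power2_eq_1_iff
      power_one zero_le_one not_one_le_zero neg_0_le_iff_le)

lemma xfun_unit_circle:
  assumes "cmod \<omega> = 1"
  shows "xfun a \<omega> = of_real (Re \<omega> / cmod a)"
proof -
  have "inverse \<omega> = cnj \<omega>"
    using assms unimodular_iff_norm by (metis inverse_unique)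
  then show ?thesis by (simp add: xfun_def complex_add_cnj)
qed

lemma LIMSEQ_transform_ge:
  assumes "f \<longlonglongrightarrow> l" and "\<And>n. n \<ge> k \<Longrightarrow> f n = g n"
  shows "g \<longlonglongrightarrow> l"
proof (rule Lim_transform_eventually[OF assms(1)])
  show "eventually (\<lambda>n. f n = g n) sequentially"
    using assms(2) by (rule eventually_sequentiallyI)
qed

section \<open>Transfer equations\<close>

definition transfer_eqs ::
    "complex \<Rightarrow> complex \<Rightarrow> complex \<Rightarrow> complex \<Rightarrow> complex \<Rightarrow> nat \<Rightarrow> (nat \<Rightarrow> complex \<times> complex) \<Rightarrow> bool"
  where "transfer_eqs a b c d z M F \<longleftrightarrow> (\<forall>n. Suc n < M \<longrightarrow>
     z * fst (F n) = a * fst (F (Suc n)) + b * snd (F (Suc n)) \<and>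
     z * snd (F (Suc n)) = c * fst (F n) + d * snd (F n))"

definition lincomb ::
    "complex \<Rightarrow> (nat \<Rightarrow> complex \<times> complex) \<Rightarrow> complex \<Rightarrow> (nat \<Rightarrow> complex \<times> complex) \<Rightarrow> nat \<Rightarrow> complex \<times> complex"
  where "lincomb A F B G n = (A * fst (F n) + B * fst (G n), A * snd (F n) + B * snd (G n))"

definition mode :: "complex \<Rightarrow> complex \<Rightarrow> complex \<Rightarrow> complex \<Rightarrow> nat \<Rightarrow> complex \<times> complex"
  where "mode c d z r n = (r ^ n * (r * z - d), c * r ^ n)"

lemma transfer_eqs_cong:
  assumes "\<And>n. n < M \<Longrightarrow> F n = G n"
  shows "transfer_eqs a b c d z M F \<longleftrightarrow> transfer_eqs a b c d z M G"
  using assms unfolding transfer_eqs_def by (metis Suc_lessD)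

lemma transfer_eqs_lincomb:
  assumes "transfer_eqs a b c d z M F" and "transfer_eqs a b c d z M G"
  shows "transfer_eqs a b c d z M (lincomb A F B G)"
  unfolding transfer_eqs_def
proof (intro allI impI conjI)
  fix n assume n: "Suc n < M"
  let ?H = "lincomb A F B G"
  have "z * fst (?H n) - (a * fst (?H (Suc n)) + b * snd (?H (Suc n)))
      = A * (z * fst (F n) - (a * fst (F (Suc n)) + b * snd (F (Suc n))))
      + B * (z * fst (G n) - (a * fst (G (Suc n)) + b * snd (G (Suc n))))"
    by (simp add: lincomb_def algebra_simps)
  with assms n show "z * fst (?H n) = a * fst (?H (Suc n)) + b * snd (?H (Suc n))"
    unfolding transfer_eqs_def by simp
  have "z * snd (?H (Suc n)) - (c * fst (?H n) + d * snd (?H n))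
      = A * (z * snd (F (Suc n)) - (c * fst (F n) + d * snd (F n)))
      + B * (z * snd (G (Suc n)) - (c * fst (G n) + d * snd (G n)))"
    by (simp add: lincomb_def algebra_simps)
  with assms n show "z * snd (?H (Suc n)) = c * fst (?H n) + d * snd (?H n)"
    unfolding transfer_eqs_def by simp
qed

lemma transfer_eqs_mode:
  assumes "a * z * r\<^sup>2 - (z\<^sup>2 + (a * d - b * c)) * r + d * z = 0"
  shows "transfer_eqs a b c d z M (mode c d z r)"
proof -
  have "z * (r * z - d) - (a * r * (r * z - d) + b * c * r)
      = - (a * z * r\<^sup>2 - (z\<^sup>2 + (a * d - b * c)) * r + d * z)"
    by (simp add: algebra_simps power2_eq_square)
  with assms have eig: "z * (r * z - d) = a * r * (r * z - d) + b * c * r" by simp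
  have "z * (r ^ n * (r * z - d)) = a * (r ^ Suc n * (r * z - d)) + b * (c * r ^ Suc n)" for n
  proof -
    have "z * (r ^ n * (r * z - d)) = r ^ n * (z * (r * z - d))" by simp
    also have "\<dots> = r ^ n * (a * r * (r * z - d) + b * c * r)" by (simp only: eig)
    finally show ?thesis by (simp add: algebra_simps)
  qed
  then show ?thesis by (simp add: transfer_eqs_def mode_def algebra_simps)
qed

lemma transfer_eqs_unique:
  assumes "a \<noteq> 0" and "z \<noteq> 0"
    and F: "transfer_eqs a b c d z M F" and G: "transfer_eqs a b c d z M G"
    and "F 0 = G 0" and "n < M"
  shows "F n = G n"
  using \<open>n < M\<close>
proof (induction n)
  case 0
  show ?case by fact
next
  case (Suc n)
  then have IH: "F n = G n" by simp
  have "z * snd (F (Suc n)) = z * snd (G (Suc n))"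
    using F G Suc.prems IH unfolding transfer_eqs_def by simp
  then have snd_eq: "snd (F (Suc n)) = snd (G (Suc n))" using \<open>z \<noteq> 0\<close> by simp
  have "a * fst (F (Suc n)) = a * fst (G (Suc n))"
    using F G Suc.prems IH snd_eq unfolding transfer_eqs_def by (metis add_right_cancel)
  then have "fst (F (Suc n)) = fst (G (Suc n))" using \<open>a \<noteq> 0\<close> by simp
  with snd_eq show ?case by (simp add: prod_eq_iff)
qed

lemma is_resolvent_sol_transfer_eqs:
  assumes "M \<ge> 1" and sol: "is_resolvent_sol a b c d M z \<phi>"
  shows "transfer_eqs a b c d z M (\<lambda>n. \<phi> (int n))"
    and "z * snd (\<phi> 0) = 1" and "z * fst (\<phi> (int M - 1)) = 0"
proof -
  have out: "\<phi> (-1) = (0, 0)" "\<phi> (int M) = (0, 0)"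
    using sol unfolding is_resolvent_sol_def in_l2_Gamma_def by auto
  have eq: "z * fst (\<phi> x) - fst (E_op a b c d M \<phi> x) = 0"
      "z * snd (\<phi> x) - snd (E_op a b c d M \<phi> x) = (if x = 0 then 1 else 0)"
    if "0 \<le> x" "x < int M" for x
    using that sol unfolding is_resolvent_sol_def by auto
  show "transfer_eqs a b c d z M (\<lambda>n. \<phi> (int n))"
    unfolding transfer_eqs_def
  proof (intro allI impI conjI)
    fix n assume "Suc n < M"
    then show "z * fst (\<phi> (int n)) = a * fst (\<phi> (int (Suc n))) + b * snd (\<phi> (int (Suc n)))"
      and "z * snd (\<phi> (int (Suc n))) = c * fst (\<phi> (int n)) + d * snd (\<phi> (int n))"
      using eq(1)[of "int n"] eq(2)[of "int (Suc n)"] by (simp_all add: E_op_def add.commute)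
  qed
  show "z * snd (\<phi> 0) = 1"
    using eq(2)[of 0] assms(1) out by (simp add: E_op_def)
  show "z * fst (\<phi> (int M - 1)) = 0"
    using eq(1)[of "int M - 1"] assms(1) out by (simp add: E_op_def)
qed

lemma is_resolvent_solI:
  assumes "in_l2_Gamma M \<phi>" and T: "transfer_eqs a b c d z M (\<lambda>n. \<phi> (int n))"
    and left: "z * snd (\<phi> 0) = 1" and right: "z * fst (\<phi> (int M - 1)) = 0"
  shows "is_resolvent_sol a b c d M z \<phi>"
  unfolding is_resolvent_sol_def
proof (intro conjI allI impI)
  have out: "\<phi> (-1) = (0, 0)" "\<phi> (int M) = (0, 0)"
    using assms(1) unfolding in_l2_Gamma_def by auto
  fix x :: int assume x: "0 \<le> x \<and> x < int M"
  then obtain n where n: "x = int n" "n < M" by (metis nonneg_int_cases of_nat_less_iff)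
  show "z * fst (\<phi> x) - fst (E_op a b c d M \<phi> x) = 0"
  proof (cases "Suc n < M")
    case True
    then show ?thesis using T n x unfolding transfer_eqs_def by (simp add: E_op_def add.commute)
  next
    case False
    then have "x = int M - 1" using n by simp
    then show ?thesis using right out x by (simp add: E_op_def)
  qed
  show "z * snd (\<phi> x) - snd (E_op a b c d M \<phi> x) = (if x = 0 then 1 else 0)"
  proof (cases n)
    case 0
    then show ?thesis using left out n x by (simp add: E_op_def)
  next
    case (Suc m)
    then show ?thesis using T n x unfolding transfer_eqs_def by (simp add: E_op_def add.commute)
  qed
qed (fact assms(1))

section \<open>The resolvent equation outside the band\<close>

locale outside_band =
  fixes a b c d sqD \<omega> :: complex and \<theta> :: real
  assumes unitary: "unitary2 a b c d"
    and entries_nonzero: "a * b * c * d \<noteq> 0"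
    and sqD_square: "sqD ^ 2 = a * d - b * c"
    and \<omega>_out: "\<omega> \<in> B_out a"
    and \<theta>_pos: "\<theta> > 0" and cosh_\<theta>: "cosh \<theta> = cmod (xfun a \<omega>)"
begin

definition "\<Delta> = a * d - b * c"
definition "z = sqD * \<omega>"

lemma a_nonzero: "a \<noteq> 0" and c_nonzero: "c \<noteq> 0"
  using entries_nonzero by auto

lemma d_eq: "d = \<Delta> * cnj a"
  using unitary2_entries(1)[OF unitary] by (simp add: \<Delta>_def)

lemma \<Delta>_unimodular: "\<Delta> * cnj \<Delta> = 1"
  using unitary2_det_unimodular[OF unitary] by (simp add: \<Delta>_def)

lemma norm_\<omega>: "cmod \<omega> = 1"
  using \<omega>_out by (simp add: B_out_def)

lemma \<omega>_unimodular: "\<omega> * cnj \<omega> = 1"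
  using norm_\<omega> unimodular_iff_norm by blast

lemma norm_sqD: "cmod sqD = 1"
proof -
  have "cmod \<Delta> = 1" using \<Delta>_unimodular unimodular_iff_norm by blast
  moreover have "cmod sqD ^ 2 = cmod \<Delta>"
    using sqD_square by (simp add: \<Delta>_def norm_power[symmetric])
  ultimately have "cmod sqD ^ 2 = 1" by simp
  then show ?thesis by (metis norm_ge_zero power2_eq_1_iff neg_0_le_iff_le not_one_le_zero)
qed

lemma z_unimodular: "z * cnj z = 1"
proof -
  have "cmod z = 1" using norm_sqD norm_\<omega> by (simp add: z_def norm_mult)
  then show ?thesis using unimodular_iff_norm by blast
qed

lemma z_nonzero: "z \<noteq> 0"
  using z_unimodular by auto

lemma norm_a_pos: "cmod a > 0"
  using a_nonzero by simp

lemma cosh_\<theta>_eq: "cosh \<theta> = \<bar>Re \<omega>\<bar> / cmod a"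
  using cosh_\<theta> xfun_unit_circle[OF norm_\<omega>] norm_a_pos by (simp add: norm_divide)

text \<open>The roots of the characteristic equation of the transfer equations are \<open>\<rho> t\<close> with
  \<open>t + 1/t = 2 x(\<omega>)\<close>, i.e. \<open>t = \<mu>\<^sup>\<plusminus>\<^sup>1\<close>; the sign of \<open>\<mu>\<close> is that of \<open>Re \<omega>\<close>.\<close>

definition "\<mu> = (if Re \<omega> \<ge> 0 then exp \<theta> else - exp \<theta>)"
definition "\<rho> = sqD * cnj a / of_real (cmod a)"

lemma \<mu>_plus_inverse: "\<mu> + 1 / \<mu> = 2 * Re \<omega> / cmod a"
proof -
  have "exp \<theta> + 1 / exp \<theta> = 2 * cosh \<theta>" by (simp add: cosh_def exp_minus field_simps)
  then show ?thesis using cosh_\<theta>_eq by (auto simp: \<mu>_def abs_if field_simps)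
qed

lemma abs_\<mu>: "\<bar>\<mu>\<bar> = exp \<theta>"
  by (simp add: \<mu>_def)

lemma \<mu>_nonzero: "\<mu> \<noteq> 0"
  using abs_\<mu> by auto

lemma abs_\<mu>_gt_1: "\<bar>\<mu>\<bar> > 1"
  using abs_\<mu> \<theta>_pos by simp

lemma \<mu>_square: "\<mu>\<^sup>2 = exp (2 * \<theta>)"
  by (metis abs_\<mu> power2_abs exp_double power2_eq_square)

lemma \<mu>_square_gt_1: "\<mu>\<^sup>2 > 1"
  using \<mu>_square \<theta>_pos by simp

lemma a_\<rho>_square: "a * \<rho>\<^sup>2 = d"
proof -
  have "a * \<rho>\<^sup>2 = sqD\<^sup>2 * cnj a * (a * cnj a) / of_real ((cmod a)\<^sup>2)"
    by (simp add: \<rho>_def power2_eq_square field_simps)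
  also have "\<dots> = \<Delta> * cnj a"
    using norm_a_pos sqD_square by (simp add: \<Delta>_def complex_norm_square[symmetric])
  finally show ?thesis using d_eq by simp
qed

lemma \<rho>_unimodular: "\<rho> * cnj \<rho> = 1"
proof -
  have "\<rho> * cnj \<rho> = (sqD * cnj sqD) * (a * cnj a) / of_real ((cmod a)\<^sup>2)"
    by (simp add: \<rho>_def power2_eq_square field_simps)
  then show ?thesis
    using norm_sqD norm_a_pos by (simp add: unimodular_iff_norm complex_norm_square[symmetric])
qed

lemma \<rho>_z: "\<rho> * z = \<Delta> * cnj a * \<omega> / of_real (cmod a)"
proof -
  have "\<rho> * z = sqD\<^sup>2 * cnj a * \<omega> / of_real (cmod a)"
    by (simp add: \<rho>_def z_def power2_eq_square)
  then show ?thesis using sqD_square by (simp add: \<Delta>_def)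
qed

lemma characteristic_root:
  fixes t :: real
  assumes "t \<noteq> 0" and t: "t + 1 / t = 2 * Re \<omega> / cmod a"
  shows "a * z * (\<rho> * of_real t)\<^sup>2 - (z\<^sup>2 + \<Delta>) * (\<rho> * of_real t) + d * z = 0"
proof -
  have lhs: "a * z * (\<rho> * of_real t)\<^sup>2 + d * z = d * z * of_real (t\<^sup>2 + 1)"
    using a_\<rho>_square by (simp add: power_mult_distrib algebra_simps)
  have z2: "z\<^sup>2 = \<Delta> * \<omega>\<^sup>2"
    using sqD_square by (simp add: z_def \<Delta>_def power_mult_distrib)
  have "\<omega>\<^sup>2 + 1 = \<omega> * (\<omega> + cnj \<omega>)"
    using \<omega>_unimodular by (simp add: power2_eq_square algebra_simps)
  also have "\<dots> = \<omega> * of_real (cmod a * (t + 1 / t))"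
    using t norm_a_pos by (simp add: complex_add_cnj)
  finally have \<omega>2: "\<omega>\<^sup>2 + 1 = \<omega> * of_real (cmod a) * of_real ((t\<^sup>2 + 1) / t)"
    using \<open>t \<noteq> 0\<close> by (simp add: field_simps power2_eq_square)
  have "(z\<^sup>2 + \<Delta>) * (\<rho> * of_real t) = \<Delta> * (\<omega>\<^sup>2 + 1) * \<rho> * of_real t"
    using z2 by (simp add: algebra_simps)
  also have "\<dots> = \<Delta> * \<omega> * of_real (cmod a) * \<rho> * of_real (t\<^sup>2 + 1)"
    unfolding \<omega>2 using \<open>t \<noteq> 0\<close> by (simp add: field_simps)
  also have "\<dots> = d * z * of_real (t\<^sup>2 + 1)"
    using norm_a_pos d_eq by (simp add: \<rho>_def z_def field_simps)
  finally show ?thesis using lhs by (simp add: algebra_simps)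
qed

lemma norm_characteristic_root_shift:
  fixes t :: real
  assumes "t \<noteq> 0" and t: "t + 1 / t = 2 * Re \<omega> / cmod a"
  shows "cmod (\<rho> * of_real t * z - d) = cmod c * \<bar>t\<bar>"
proof -
  define A where "A = cmod a"
  define X where "X = \<rho> * of_real t * z - d"
  have "A > 0" using norm_a_pos by (simp add: A_def)
  have shift: "X = \<Delta> * cnj a * (\<omega> * of_real (t / A) - 1)"
    using \<rho>_z d_eq \<open>A > 0\<close> by (simp add: X_def A_def field_simps)
  have "X * cnj X = (\<Delta> * cnj \<Delta>) * (a * cnj a)
        * (\<omega> * cnj \<omega> * (of_real (t / A))\<^sup>2 - (\<omega> + cnj \<omega>) * of_real (t / A) + 1)"
    unfolding shift
    by (simp add: algebra_simps power2_eq_square add_divide_distrib diff_divide_distrib)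
  also have "\<dots> = of_real (A\<^sup>2 * ((t / A)\<^sup>2 - 2 * Re \<omega> * (t / A) + 1))"
    using \<Delta>_unimodular \<omega>_unimodular
    by (simp add: A_def complex_add_cnj complex_norm_square[symmetric])
  also have "A\<^sup>2 * ((t / A)\<^sup>2 - 2 * Re \<omega> * (t / A) + 1) = (1 - A\<^sup>2) * t\<^sup>2"
  proof -
    have "2 * Re \<omega> = A * (t + 1 / t)" using t \<open>A > 0\<close> by (simp add: A_def field_simps)
    then show ?thesis using \<open>A > 0\<close> \<open>t \<noteq> 0\<close> by (simp add: field_simps power2_eq_square)
  qed
  also have "1 - A\<^sup>2 = (cmod c)\<^sup>2"
    using unitary2_column_norm[OF unitary]
    by (simp add: A_def complex_norm_square[symmetric])
      (metis of_real_1 of_real_diff of_real_eq_iff of_real_power)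
  finally have "X * cnj X = of_real ((cmod c * \<bar>t\<bar>)\<^sup>2)"
    by (simp add: power_mult_distrib)
  then have "(cmod X)\<^sup>2 = (cmod c * \<bar>t\<bar>)\<^sup>2"
    by (metis complex_norm_square of_real_eq_iff)
  then show ?thesis by (simp add: X_def power2_eq_iff_nonneg)
qed

definition "r1 = \<rho> * of_real \<mu>"
definition "r2 = \<rho> / of_real \<mu>"
definition "p1 = r1 * z - d"
definition "p2 = r2 * z - d"

lemma \<mu>_inverse_plus: "1 / \<mu> + 1 / (1 / \<mu>) = 2 * Re \<omega> / cmod a"
  using \<mu>_plus_inverse by simp

lemma r2_eq: "r2 = \<rho> * of_real (1 / \<mu>)"
  by (simp add: r2_def divide_inverse)

lemma characteristic_r1: "a * z * r1\<^sup>2 - (z\<^sup>2 + (a * d - b * c)) * r1 + d * z = 0"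
  using characteristic_root[OF \<mu>_nonzero \<mu>_plus_inverse] by (simp add: r1_def \<Delta>_def)

lemma characteristic_r2: "a * z * r2\<^sup>2 - (z\<^sup>2 + (a * d - b * c)) * r2 + d * z = 0"
  using characteristic_root[of "1 / \<mu>"] \<mu>_nonzero \<mu>_inverse_plus by (simp add: r2_eq \<Delta>_def)

lemma norm_\<rho>: "cmod \<rho> = 1"
  using \<rho>_unimodular unimodular_iff_norm by blast

lemma norm_r1: "cmod r1 = \<bar>\<mu>\<bar>" and norm_r2: "cmod r2 = 1 / \<bar>\<mu>\<bar>"
  by (simp_all add: r1_def r2_def norm_mult norm_divide norm_\<rho>)

lemma norm_p1: "cmod p1 = cmod c * \<bar>\<mu>\<bar>"
  using norm_characteristic_root_shift[OF \<mu>_nonzero \<mu>_plus_inverse] by (simp add: p1_def r1_def)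

lemma norm_p2: "cmod p2 = cmod c / \<bar>\<mu>\<bar>"
  using norm_characteristic_root_shift[of "1 / \<mu>"] \<mu>_nonzero \<mu>_inverse_plus
  by (simp add: p2_def r2_eq)

lemma r1_nonzero: "r1 \<noteq> 0" and p1_nonzero: "p1 \<noteq> 0"
  using norm_r1 norm_p1 \<mu>_nonzero c_nonzero by auto

lemma modes_differ: "r1 ^ k * p1 \<noteq> r2 ^ k * p2"
proof
  assume "r1 ^ k * p1 = r2 ^ k * p2"
  then have "\<bar>\<mu>\<bar> ^ k * (cmod c * \<bar>\<mu>\<bar>) = (1 / \<bar>\<mu>\<bar>) ^ k * (cmod c / \<bar>\<mu>\<bar>)"
    by (metis norm_mult norm_power norm_r1 norm_r2 norm_p1 norm_p2)
  moreover have "(1 / \<bar>\<mu>\<bar>) ^ k * (cmod c / \<bar>\<mu>\<bar>) < \<bar>\<mu>\<bar> ^ k * (cmod c * \<bar>\<mu>\<bar>)"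
  proof -
    have "(1 / \<bar>\<mu>\<bar>) ^ k * (cmod c / \<bar>\<mu>\<bar>) \<le> cmod c / \<bar>\<mu>\<bar>"
      using abs_\<mu>_gt_1 by (intro mult_left_le_one_le) (simp_all add: power_le_one)
    also have "\<dots> < cmod c"
      using abs_\<mu>_gt_1 c_nonzero by (simp add: divide_less_eq)
    also have "\<dots> \<le> cmod c * \<bar>\<mu>\<bar>"
      using abs_\<mu>_gt_1 by (simp add: mult_le_cancel_left1)
    also have "\<dots> \<le> \<bar>\<mu>\<bar> ^ k * (cmod c * \<bar>\<mu>\<bar>)"
      using mult_right_mono[of 1 "\<bar>\<mu>\<bar> ^ k" "cmod c * \<bar>\<mu>\<bar>"] abs_\<mu>_gt_1
      by (simp add: one_le_power)
    finally show ?thesis .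
  qed
  ultimately show False by simp
qed

definition "mode_sum A B = lincomb A (mode c d z r1) B (mode c d z r2)"

lemma mode_sum_components:
  "mode_sum A B n = (A * r1 ^ n * p1 + B * r2 ^ n * p2, c * (A * r1 ^ n + B * r2 ^ n))"
  by (simp add: mode_sum_def lincomb_def mode_def p1_def p2_def algebra_simps)

lemma transfer_eqs_mode_sum: "transfer_eqs a b c d z M (mode_sum A B)"
  unfolding mode_sum_def
  by (intro transfer_eqs_lincomb transfer_eqs_mode characteristic_r1 characteristic_r2)

text \<open>The boundary conditions fix the coefficients: the second component at \<open>0\<close> forces
  \<open>\<alpha> M + \<beta> M = g\<close>, the first component vanishes at \<open>M - 1\<close>, where \<open>w M\<close> is the ratio of the
  decaying to the growing mode.\<close>

definition "g = 1 / (c * z)"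
definition "w M = r2 ^ (M - 1) * p2 / (r1 ^ (M - 1) * p1)"
definition "\<alpha> M = g * w M / (w M - 1)"
definition "\<beta> M = g / (1 - w M)"

definition "resolvent M x = (if 0 \<le> x \<and> x < int M then mode_sum (\<alpha> M) (\<beta> M) (nat x) else (0, 0))"

lemma w_ne_1: "w M \<noteq> 1"
  using modes_differ[of "M - 1"] r1_nonzero p1_nonzero by (auto simp: w_def)

lemma \<alpha>_plus_\<beta>: "\<alpha> M + \<beta> M = g"
proof -
  have "w M - 1 \<noteq> 0" using w_ne_1[of M] by simp
  have "\<beta> M = - (g / (w M - 1))"
    by (metis \<beta>_def minus_diff_eq divide_minus_right)
  then have "\<alpha> M + \<beta> M = (g * w M - g) / (w M - 1)"
    by (simp add: \<alpha>_def diff_divide_distrib)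
  also have "g * w M - g = g * (w M - 1)" by (simp add: algebra_simps)
  finally show ?thesis using \<open>w M - 1 \<noteq> 0\<close> by simp
qed

lemma mode_sum_right_end: "fst (mode_sum (\<alpha> M) (\<beta> M) (M - 1)) = 0"
proof -
  have "r2 ^ (M - 1) * p2 = w M * (r1 ^ (M - 1) * p1)"
    using r1_nonzero p1_nonzero by (simp add: w_def)
  then show ?thesis
    using w_ne_1[of M] by (simp add: mode_sum_components \<alpha>_def \<beta>_def field_simps)
qed

lemma resolvent_is_sol:
  assumes "M \<ge> 1"
  shows "is_resolvent_sol a b c d M z (resolvent M)"
proof (rule is_resolvent_solI)
  show "in_l2_Gamma M (resolvent M)" by (simp add: in_l2_Gamma_def resolvent_def)
  show "transfer_eqs a b c d z M (\<lambda>n. resolvent M (int n))"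
    using transfer_eqs_cong[of M "\<lambda>n. resolvent M (int n)" "mode_sum (\<alpha> M) (\<beta> M)"]
      transfer_eqs_mode_sum
    by (simp add: resolvent_def)
  show "z * snd (resolvent M 0) = 1"
    using assms \<alpha>_plus_\<beta>[of M] z_nonzero c_nonzero
    by (simp add: resolvent_def mode_sum_components g_def)
  show "z * fst (resolvent M (int M - 1)) = 0"
    using assms mode_sum_right_end[of M] by (simp add: resolvent_def nat_diff_distrib)
qed

text \<open>The solution with initial value \<open>(1, 0)\<close> does not vanish in the first component at
  \<open>M - 1\<close>, so the homogeneous boundary value problem has only the trivial solution.\<close>

lemma transfer_eqs_boundary_zero:
  assumes D: "transfer_eqs a b c d z M D"
    and left: "snd (D 0) = 0" and right: "fst (D (M - 1)) = 0" and "n < M"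
  shows "D n = (0, 0)"
proof -
  define h where "h = 1 / (p1 - p2)"
  define H where "H = mode_sum h (- h)"
  have "p1 \<noteq> p2" using modes_differ[of 0] by simp
  then have "h \<noteq> 0" and "h * p1 - h * p2 = 1"
    by (simp_all add: h_def diff_divide_distrib[symmetric])
  then have H0: "H 0 = (1, 0)" by (simp add: H_def mode_sum_components)
  have DH: "D k = lincomb (fst (D 0)) H 0 H k" if "k < M" for k
  proof (rule transfer_eqs_unique[OF a_nonzero z_nonzero D _ _ that])
    show "transfer_eqs a b c d z M (lincomb (fst (D 0)) H 0 H)"
      unfolding H_def by (intro transfer_eqs_lincomb transfer_eqs_mode_sum)
    show "D 0 = lincomb (fst (D 0)) H 0 H 0"
      using H0 left by (simp add: lincomb_def prod_eq_iff)
  qed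
  have "fst (H (M - 1)) = h * (r1 ^ (M - 1) * p1 - r2 ^ (M - 1) * p2)"
    by (simp add: H_def mode_sum_components algebra_simps)
  with \<open>h \<noteq> 0\<close> have "fst (H (M - 1)) \<noteq> 0"
    using modes_differ[of "M - 1"] by simp
  moreover have "fst (D 0) * fst (H (M - 1)) = 0"
    using DH[of "M - 1"] right \<open>n < M\<close> by (simp add: lincomb_def)
  ultimately have "fst (D 0) = 0" by simp
  then show ?thesis using DH[OF \<open>n < M\<close>] by (simp add: lincomb_def)
qed

lemma resolvent_unique:
  assumes "M \<ge> 1" and sol: "is_resolvent_sol a b c d M z \<phi>"
  shows "\<phi> = resolvent M"
proof -
  define F where "F = (\<lambda>n. \<phi> (int n))"
  define G where "G = (\<lambda>n. resolvent M (int n))"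
  have F: "transfer_eqs a b c d z M F" "z * snd (F 0) = 1" "fst (F (M - 1)) = 0"
    using is_resolvent_sol_transfer_eqs[OF assms] assms(1) z_nonzero by (simp_all add: F_def)
  have G: "transfer_eqs a b c d z M G" "z * snd (G 0) = 1" "fst (G (M - 1)) = 0"
    using is_resolvent_sol_transfer_eqs[OF assms(1) resolvent_is_sol[OF assms(1)]] assms(1) z_nonzero
    by (simp_all add: G_def)
  have "snd (F 0) = snd (G 0)" using F(2) G(2) z_nonzero by (metis mult_left_cancel)
  then have "lincomb 1 F (- 1) G n = (0, 0)" if "n < M" for n
    using F(1,3) G(1,3) that
    by (intro transfer_eqs_boundary_zero transfer_eqs_lincomb) (simp_all add: lincomb_def)
  then have FG: "F n = G n" if "n < M" for n
    using that by (simp add: lincomb_def prod_eq_iff)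
  show ?thesis
  proof
    fix x
    show "\<phi> x = resolvent M x"
    proof (cases "0 \<le> x \<and> x < int M")
      case True
      then obtain n where "x = int n" "n < M" by (metis nonneg_int_cases of_nat_less_iff)
      with FG show ?thesis by (simp add: F_def G_def)
    next
      case False
      with sol show ?thesis by (auto simp: is_resolvent_sol_def in_l2_Gamma_def resolvent_def)
    qed
  qed
qed

lemma the_resolvent_sol:
  assumes "M \<ge> 1"
  shows "(THE \<phi>. is_resolvent_sol a b c d M z \<phi>) = resolvent M"
  using resolvent_is_sol resolvent_unique assms by (intro the_equality) auto


section \<open>Asymptotics of the energy\<close>

definition "Q = \<mu>\<^sup>2"
definition "q = 1 / \<mu>\<^sup>2"
definition "cross = p1 * cnj p2 + c * cnj c"

lemma Q_gt_1: "Q > 1" and q_pos: "q > 0" and q_lt_1: "q < 1" and Q_q: "Q * q = 1"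
  using \<mu>_square_gt_1 \<mu>_nonzero by (simp_all add: Q_def q_def divide_less_eq)

lemma r1_r1: "r1 * cnj r1 = of_real Q" and r2_r2: "r2 * cnj r2 = of_real q"
  and r1_r2: "r1 * cnj r2 = 1" and r2_r1: "r2 * cnj r1 = 1"
proof -
  have "r1 * cnj r1 = (\<rho> * cnj \<rho>) * of_real Q" "r2 * cnj r2 = (\<rho> * cnj \<rho>) * of_real q"
    "r1 * cnj r2 = (\<rho> * cnj \<rho>) * (of_real \<mu> / of_real \<mu>)"
    "r2 * cnj r1 = (\<rho> * cnj \<rho>) * (of_real \<mu> / of_real \<mu>)"
    by (simp_all add: r1_def r2_def Q_def q_def power2_eq_square algebra_simps)
  then show "r1 * cnj r1 = of_real Q" "r2 * cnj r2 = of_real q"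
    "r1 * cnj r2 = 1" "r2 * cnj r1 = 1"
    using \<rho>_unimodular \<mu>_nonzero by simp_all
qed

lemma p1_p1: "p1 * cnj p1 = c * cnj c * of_real Q" and p2_p2: "p2 * cnj p2 = c * cnj c * of_real q"
  using norm_p1 norm_p2 \<mu>_nonzero
  by (simp_all add: complex_norm_square[symmetric] Q_def q_def power_mult_distrib power_divide)

lemma norm_sq_mode_sum:
  "(cmod (fst (mode_sum A B n)))\<^sup>2 + (cmod (snd (mode_sum A B n)))\<^sup>2 =
     (cmod A)\<^sup>2 * (cmod c)\<^sup>2 * (Q + 1) * Q ^ n + (cmod B)\<^sup>2 * (cmod c)\<^sup>2 * (q + 1) * q ^ n
     + 2 * Re (A * cnj B * cross)"
proof -
  define u where "u = r1 ^ n"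
  define v where "v = r2 ^ n"
  have uu: "u * cnj u = of_real (Q ^ n)" and vv: "v * cnj v = of_real (q ^ n)"
    and uv: "u * cnj v = 1" and vu: "v * cnj u = 1"
    using r1_r1 r2_r2 r1_r2 r2_r1 by (simp_all add: u_def v_def power_mult_distrib[symmetric])
  have "of_real ((cmod (fst (mode_sum A B n)))\<^sup>2 + (cmod (snd (mode_sum A B n)))\<^sup>2)
      = (A * u * p1 + B * v * p2) * cnj (A * u * p1 + B * v * p2)
        + (c * (A * u + B * v)) * cnj (c * (A * u + B * v))"
    by (simp only: mode_sum_components u_def v_def fst_conv snd_conv of_real_add complex_norm_square)
  also have "\<dots> = A * cnj A * (u * cnj u) * (p1 * cnj p1 + c * cnj c)
      + B * cnj B * (v * cnj v) * (p2 * cnj p2 + c * cnj c)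
      + A * cnj B * (u * cnj v) * (p1 * cnj p2 + c * cnj c)
      + B * cnj A * (v * cnj u) * (p2 * cnj p1 + c * cnj c)"
    by (simp add: algebra_simps)
  also have "\<dots> = (A * cnj A) * (c * cnj c) * of_real (Q ^ n * (Q + 1))
      + (B * cnj B) * (c * cnj c) * of_real (q ^ n * (q + 1))
      + (A * cnj B * cross + cnj (A * cnj B * cross))"
    unfolding uu vv uv vu p1_p1 p2_p2 cross_def by (simp add: algebra_simps)
  also have "\<dots> = of_real ((cmod A)\<^sup>2 * (cmod c)\<^sup>2 * (Q + 1) * Q ^ n
      + (cmod B)\<^sup>2 * (cmod c)\<^sup>2 * (q + 1) * q ^ n) + (A * cnj B * cross + cnj (A * cnj B * cross))"
    by (simp only: complex_norm_square[symmetric] of_real_mult of_real_add mult_ac)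
  finally have "of_real ((cmod (fst (mode_sum A B n)))\<^sup>2 + (cmod (snd (mode_sum A B n)))\<^sup>2) =
      of_real ((cmod A)\<^sup>2 * (cmod c)\<^sup>2 * (Q + 1) * Q ^ n
      + (cmod B)\<^sup>2 * (cmod c)\<^sup>2 * (q + 1) * q ^ n) + (A * cnj B * cross + cnj (A * cnj B * cross))" .
  then show ?thesis by (simp only: complex_add_cnj of_real_add[symmetric] of_real_eq_iff)
qed

lemma energy_closed_form:
  assumes "M \<ge> 1"
  shows "energy a b c d sqD \<omega> M =
      (cmod (\<alpha> M))\<^sup>2 * (cmod c)\<^sup>2 * (Q + 1) * ((1 - Q ^ M) / (1 - Q))
    + (cmod (\<beta> M))\<^sup>2 * (cmod c)\<^sup>2 * (q + 1) * ((1 - q ^ M) / (1 - q))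
    + real M * (2 * Re (\<alpha> M * cnj (\<beta> M) * cross))"
proof -
  have "energy a b c d sqD \<omega> M =
      (\<Sum>n<M. (cmod (fst (mode_sum (\<alpha> M) (\<beta> M) n)))\<^sup>2 + (cmod (snd (mode_sum (\<alpha> M) (\<beta> M) n)))\<^sup>2)"
    using the_resolvent_sol[OF assms]
    unfolding energy_def Let_def z_def[symmetric] by (intro sum.cong) (auto simp: resolvent_def)
  also have "\<dots> = (cmod (\<alpha> M))\<^sup>2 * (cmod c)\<^sup>2 * (Q + 1) * (\<Sum>n<M. Q ^ n)
      + (cmod (\<beta> M))\<^sup>2 * (cmod c)\<^sup>2 * (q + 1) * (\<Sum>n<M. q ^ n)
      + real M * (2 * Re (\<alpha> M * cnj (\<beta> M) * cross))"
    by (simp add: norm_sq_mode_sum sum.distrib sum_distrib_left)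
  finally show ?thesis
    using Q_gt_1 q_lt_1 by (simp add: sum_gp_strict)
qed

lemma norm_w:
  assumes "M \<ge> 1"
  shows "cmod (w M) = q ^ M"
proof -
  have "cmod (w M) = (1 / \<bar>\<mu>\<bar>) ^ (M - 1) * (cmod c / \<bar>\<mu>\<bar>) / (\<bar>\<mu>\<bar> ^ (M - 1) * (cmod c * \<bar>\<mu>\<bar>))"
    by (simp add: w_def norm_mult norm_divide norm_power norm_r1 norm_r2 norm_p1 norm_p2)
  also have "\<dots> = (1 / \<bar>\<mu>\<bar>) ^ (2 * M)"
  proof -
    have M': "M = Suc (M - 1)" using assms by simp
    have "\<bar>\<mu>\<bar> ^ (M - 1) * \<bar>\<mu>\<bar> ^ (M - 1) = (\<mu>\<^sup>2) ^ (M - 1)"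
      by (metis power_mult_distrib abs_mult_self_eq power2_eq_square)
    then show ?thesis
      using c_nonzero \<mu>_nonzero
      by (subst (3) M') (simp add: field_simps power_mult_distrib power_add power_mult)
  qed
  also have "\<dots> = q ^ M"
    by (simp add: q_def power_mult power2_eq_square power_divide)
  finally show ?thesis .
qed

lemma w_tendsto_0: "w \<longlonglongrightarrow> 0" and Mw_tendsto_0: "(\<lambda>M. of_nat M * w M) \<longlonglongrightarrow> 0"
proof -
  have "(\<lambda>M. q ^ M) \<longlonglongrightarrow> 0"
    using q_pos q_lt_1 by (intro LIMSEQ_power_zero) simp
  then have "(\<lambda>M. cmod (w M)) \<longlonglongrightarrow> 0"
    by (rule LIMSEQ_transform_ge[where k = 1]) (simp add: norm_w)
  then show "w \<longlonglongrightarrow> 0" by (rule tendsto_norm_zero_cancel)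
  have "(\<lambda>M. of_nat M * q ^ M) \<longlonglongrightarrow> 0"
    using q_pos q_lt_1 by (intro powser_times_n_limit_0) simp
  then have "(\<lambda>M. cmod (of_nat M * w M)) \<longlonglongrightarrow> 0"
    by (rule LIMSEQ_transform_ge[where k = 1]) (simp add: norm_w norm_mult)
  then show "(\<lambda>M. of_nat M * w M) \<longlonglongrightarrow> 0" by (rule tendsto_norm_zero_cancel)
qed

lemma \<alpha>_tendsto: "\<alpha> \<longlonglongrightarrow> 0" and M\<alpha>_tendsto: "(\<lambda>M. of_nat M * \<alpha> M) \<longlonglongrightarrow> 0"
  and \<beta>_tendsto: "\<beta> \<longlonglongrightarrow> g"
proof -
  have "(\<lambda>M. g * w M / (w M - 1)) \<longlonglongrightarrow> g * 0 / (0 - 1)"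
    "(\<lambda>M. g * (of_nat M * w M) / (w M - 1)) \<longlonglongrightarrow> g * 0 / (0 - 1)"
    "(\<lambda>M. g / (1 - w M)) \<longlonglongrightarrow> g / (1 - 0)"
    by (intro tendsto_intros w_tendsto_0 Mw_tendsto_0; simp)+
  then show "\<alpha> \<longlonglongrightarrow> 0" "(\<lambda>M. of_nat M * \<alpha> M) \<longlonglongrightarrow> 0" "\<beta> \<longlonglongrightarrow> g"
    by (simp_all add: \<alpha>_def[abs_def] \<beta>_def[abs_def] mult.left_commute)
qed

lemma growing_part_tendsto_0: "(\<lambda>M. (cmod (\<alpha> M))\<^sup>2 * Q ^ M) \<longlonglongrightarrow> 0"
proof -
  have "(\<lambda>M. (cmod g)\<^sup>2 * q ^ M / (cmod (w M - 1))\<^sup>2) \<longlonglongrightarrow> (cmod g)\<^sup>2 * 0 / (cmod (0 - 1))\<^sup>2"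
    using q_pos q_lt_1 by (intro tendsto_intros w_tendsto_0 LIMSEQ_power_zero) simp_all
  then have lim: "(\<lambda>M. (cmod g)\<^sup>2 * q ^ M / (cmod (w M - 1))\<^sup>2) \<longlonglongrightarrow> 0" by simp
  have eq: "(cmod (\<alpha> M))\<^sup>2 * Q ^ M = (cmod g)\<^sup>2 * q ^ M / (cmod (w M - 1))\<^sup>2" if "M \<ge> 1" for M
  proof -
    have "(cmod (w M))\<^sup>2 * Q ^ M = (q * (q * Q)) ^ M"
      using norm_w[OF that] by (simp add: power2_eq_square power_mult_distrib)
    then have "(cmod (w M))\<^sup>2 * Q ^ M = q ^ M" using Q_q by (simp add: mult.commute)
    then show ?thesis
      by (simp add: \<alpha>_def norm_mult norm_divide power_mult_distrib power_divide mult.assoc)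
  qed
  show ?thesis
    using lim by (rule LIMSEQ_transform_ge[where k = 1]) (simp add: eq)
qed

lemma decaying_mode_energy: "(cmod g)\<^sup>2 * (cmod c)\<^sup>2 * (q + 1) / (1 - q) = cosh \<theta> / sinh \<theta>"
proof -
  have g_c: "(cmod g)\<^sup>2 * (cmod c)\<^sup>2 = 1"
    using c_nonzero z_unimodular unimodular_iff_norm
    by (simp add: g_def norm_divide norm_mult power_divide power_mult_distrib)
  define y where "y = exp \<theta>"
  have "y > 1" using \<theta>_pos by (simp add: y_def)
  then have "y\<^sup>2 > 1" "y \<noteq> 0" by (simp_all add: one_less_power)
  have q_y: "q = 1 / y\<^sup>2" using \<mu>_square by (simp add: q_def y_def exp_double power2_eq_square)
  have "cosh \<theta> = (y\<^sup>2 + 1) / (2 * y)" "sinh \<theta> = (y\<^sup>2 - 1) / (2 * y)"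
    using \<open>y \<noteq> 0\<close> by (simp_all add: cosh_def sinh_def y_def exp_minus field_simps power2_eq_square)
  then have "cosh \<theta> / sinh \<theta> = (y\<^sup>2 + 1) / (y\<^sup>2 - 1)"
    using \<open>y \<noteq> 0\<close> by simp
  also have "\<dots> = (q + 1) / (1 - q)"
    using \<open>y\<^sup>2 > 1\<close> \<open>y \<noteq> 0\<close> unfolding q_y by (simp add: divide_simps)
  finally show ?thesis using g_c by simp
qed

theorem energy_tendsto_coth: "(\<lambda>M. energy a b c d sqD \<omega> M) \<longlonglongrightarrow> cosh \<theta> / sinh \<theta>"
proof -
  txt \<open>The closed form, regrouped so that the growing mode enters only through
    \<open>|\<alpha> M|\<^sup>2 Q\<^sup>M\<close>.\<close>
  define F where "F M =
      (cmod c)\<^sup>2 * (Q + 1) / (1 - Q) * ((cmod (\<alpha> M))\<^sup>2 - (cmod (\<alpha> M))\<^sup>2 * Q ^ M)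
    + (cmod (\<beta> M))\<^sup>2 * (cmod c)\<^sup>2 * (q + 1) * ((1 - q ^ M) / (1 - q))
    + 2 * Re (of_nat M * \<alpha> M * cnj (\<beta> M) * cross)" for M
  have "F \<longlonglongrightarrow> (cmod c)\<^sup>2 * (Q + 1) / (1 - Q) * ((cmod 0)\<^sup>2 - 0)
     + (cmod g)\<^sup>2 * (cmod c)\<^sup>2 * (q + 1) * ((1 - 0) / (1 - q)) + 2 * Re (0 * cnj g * cross)"
    unfolding F_def using q_pos q_lt_1
    by (intro tendsto_intros growing_part_tendsto_0 \<alpha>_tendsto \<beta>_tendsto M\<alpha>_tendsto
        LIMSEQ_power_zero) simp_all
  then have lim: "F \<longlonglongrightarrow> cosh \<theta> / sinh \<theta>" using decaying_mode_energy by simp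
  have eq: "F M = energy a b c d sqD \<omega> M" if "M \<ge> 1" for M
  proof -
    have "Re (of_nat M * \<alpha> M * cnj (\<beta> M) * cross) = real M * Re (\<alpha> M * cnj (\<beta> M) * cross)"
      by (simp add: mult.assoc)
    then show ?thesis
      using Q_gt_1 unfolding energy_closed_form[OF that] F_def by (simp add: field_simps)
  qed
  show ?thesis
    using lim by (rule LIMSEQ_transform_ge[where k = 1]) (simp add: eq)
qed

lemma coth_eq: "cosh \<theta> / sinh \<theta> = cmod (xfun a \<omega>) / sqrt ((cmod (xfun a \<omega>))\<^sup>2 - 1)"
proof -
  have "sqrt ((cosh \<theta>)\<^sup>2 - 1) = sinh \<theta>"
    using \<theta>_pos cosh_square_eq[of \<theta>] by simp
  then show ?thesis using cosh_\<theta> by simp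
qed

end

theorem mainTheorem9:
  fixes a b c d sqD \<omega> :: complex and \<theta> :: real
  assumes "unitary2 a b c d"
    and "a * b * c * d \<noteq> 0"
    and "sqD ^ 2 = a * d - b * c"
    and "\<omega> \<in> B_out a"
    and "\<theta> > 0" and "cosh \<theta> = cmod (xfun a \<omega>)"
  shows "(\<lambda>M. energy a b c d sqD \<omega> M) \<longlonglongrightarrow> cosh \<theta> / sinh \<theta>
     \<and> cosh \<theta> / sinh \<theta> = cmod (xfun a \<omega>) / sqrt ((cmod (xfun a \<omega>))\<^sup>2 - 1)"
proof -
  interpret outside_band a b c d sqD \<omega> \<theta>
    using assms by unfold_locales
  show ?thesis using energy_tendsto_coth coth_eq by blast
qed

end
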